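(* Let $q$ be an odd prime power, $n$ a positive integer with $n\mid(q-1)$, $\lambda\in\mathbb{F}_q^{*}$ with multiplicative order dividing $\frac{q-1}{n}$, and let $\alpha_1,\dots,\alpha_n\in\mathbb{F}_q^{*}$ be the (pairwise distinct) roots of $x^n-\lambda$, i.e. $x^n-\lambda=\prod_{i=1}^n(x-\alpha_i)$, in some fixed order. Let $\ell\ge0$, $\boldsymbol\eta=(\eta_0,\dots,\eta_\ell)\in\mathbb{F}_q^{\ell+1}\setminus\{\boldsymbol0\}$, let $r$ be an integer with $0\le r\le\ell$, and let $k=\frac{n-\ell-r}{2}$ be an integer with $k\ge2$. Let $\boldsymbol v=(v_1,\dots,v_n)$ with $v_i\in\{-1,1\}$ for $1\le i\le n-k+1$ and $v_i\in\mathbb{F}_q\setminus\{-1,0,1\}$ for $n-k+2\le i\le n$. Suppose $$1+\sum_{t=r}^{\ell}\eta_t\,\Phi_{\ell+1+r-t}\neq0,\qquad\text{where }\Phi_i=(-1)^{n-1}P\,\Omega_i\ (1\le i\le\ell+1).$$ Then the $( * )$-$(\mathcal{L},\mathcal{P})$-TGRS code $\mathcal{C}$ is an LCD code, i.e. $\mathcal{C}\cap\mathcal{C}^{\perp}=\{\boldsymbol0\}$.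
   Context: $P=\prod_{i=1}^n\alpha_i$. For an integer $t$, $S_t(x_1,\dots,x_n)$ is the complete homogeneous symmetric polynomial of degree $t$ ($S_t=0$ for $t<0$, $S_0=1$, and $S_t=\sum_{t_1+\dots+t_n=t,\,t_i\ge0}x_1^{t_1}\cdots x_n^{t_n}$ for $t\ge0$), and $\Omega_i=\sum_{t=0}^{\ell}\eta_tS_{t+1-i}(\alpha_1,\dots,\alpha_n)$. The $( * )$-$(\mathcal{L},\mathcal{P})$-TGRS code is $\mathcal{C}=\{(v_1f(\alpha_1),\dots,v_nf(\alpha_n)) : f\in\mathcal{F}_{n,k,\boldsymbol\eta}\}$, where $\mathcal{F}_{n,k,\boldsymbol\eta}=\{\sum_{i=0}^{k-1}f_ix^i+f_0\sum_{j=0}^{\ell}\eta_jx^{k+j} : f_i\in\mathbb{F}_q\}$. $\mathcal{C}^{\perp}$ is the dual with respect to the standard inner product $\sum_i x_iy_i$. *)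

theory Defs
  imports "HOL-Computational_Algebra.Polynomial"
begin

definition complete_hom :: "int \<Rightarrow> nat \<Rightarrow> (nat \<Rightarrow> 'a::comm_ring_1) \<Rightarrow> 'a" where
  "complete_hom t n x =
     (if t < 0 then 0 else
      (\<Sum>e\<in>{e::nat\<Rightarrow>nat. (\<forall>i. i \<notin> {1..n} \<longrightarrow> e i = 0) \<and> (\<Sum>i=1..n. e i) = nat t}.
          \<Prod>i=1..n. x i ^ e i))"

definition Omega :: "nat \<Rightarrow> nat \<Rightarrow> (nat \<Rightarrow> 'a::comm_ring_1) \<Rightarrow> (nat \<Rightarrow> 'a) \<Rightarrow> int \<Rightarrow> 'a" where
  "Omega n l alpha eta i = (\<Sum>t=0..l. eta t * complete_hom (int t + 1 - i) n alpha)"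

definition tgrs_polys :: "nat \<Rightarrow> nat \<Rightarrow> (nat \<Rightarrow> 'a::comm_ring_1) \<Rightarrow> 'a poly set" where
  "tgrs_polys k l eta =
     {(\<Sum>i<k. monom (fc i) i) + smult (fc 0) (\<Sum>j=0..l. monom (eta j) (k + j)) | fc. True}"

text \<open>Codewords are vectors of length n, represented as functions on {1..n}
  (zero outside {1..n}).\<close>
definition tgrs_code :: "nat \<Rightarrow> nat \<Rightarrow> nat \<Rightarrow> (nat \<Rightarrow> 'a::comm_ring_1) \<Rightarrow> (nat \<Rightarrow> 'a)
    \<Rightarrow> (nat \<Rightarrow> 'a) \<Rightarrow> (nat \<Rightarrow> 'a) set" where
  "tgrs_code n k l eta alpha v =
     {(\<lambda>i. if i \<in> {1..n} then v i * poly f (alpha i) else 0) | f. f \<in> tgrs_polys k l eta}"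

definition dual_code :: "nat \<Rightarrow> (nat \<Rightarrow> 'a::comm_ring_1) set \<Rightarrow> (nat \<Rightarrow> 'a) set" where
  "dual_code n C = {y. (\<forall>i. i \<notin> {1..n} \<longrightarrow> y i = 0) \<and> (\<forall>c\<in>C. (\<Sum>i=1..n. c i * y i) = 0)}"

end

(* A codeword is (v_i f(alpha_i))_i with f in F_{n,k,eta}, and it lies in the dual code iff
   sum_i v_i^2 f(alpha_i) g(alpha_i) = 0 for every g in F_{n,k,eta}.  Since the alpha_i are the
   roots of x^n - lambda, sum_i p(alpha_i) = n (p_0 + lambda p_n) whenever deg p < 2n, and n is
   nonzero in F_q because n divides q - 1.  Testing with g = x^j, 1 <= j < k, leaves a
   Vandermonde system on the last k - 1 positions, where v_i^2 <> 1, so f vanishes there.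
   Testing with g = 1 + x^k eta(x) then gives f_0 (1 + lambda sum_t eta_t eta_(l+r-t)) = 0, and
   this factor is the one in the hypothesis: S_m(alpha) = 0 for 0 < m < n, which reduces each
   Omega_i to a single eta.  Finally f has degree < k and vanishes at 0 and at k - 1 distinct
   nonzero alpha_i, so f = 0. *)

theory Submission
  imports Defs "HOL-Computational_Algebra.Polynomial_FPS"
begin

unbundle fps_syntax

definition exponent_vectors :: "nat \<Rightarrow> nat \<Rightarrow> (nat \<Rightarrow> nat) set" where
  "exponent_vectors n m = {e. (\<forall>i. i \<notin> {1..n} \<longrightarrow> e i = 0) \<and> (\<Sum>i=1..n. e i) = m}"

lemma finite_exponent_vectors: "finite (exponent_vectors n m)"
proof (rule finite_subset)
  show "exponent_vectors n m \<subseteq>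
          {e. \<forall>i. (i \<in> {1..n} \<longrightarrow> e i \<in> {0..m}) \<and> (i \<notin> {1..n} \<longrightarrow> e i = 0)}"
  proof safe
    fix e i assume e: "e \<in> exponent_vectors n m" and i: "i \<in> {1..n}"
    have "e i \<le> (\<Sum>i=1..n. e i)" using i by (intro member_le_sum) auto
    then show "e i \<in> {0..m}" using e by (auto simp: exponent_vectors_def)
  qed (auto simp: exponent_vectors_def)
qed (intro finite_set_of_finite_funs; simp)

lemma exponent_vectors_0: "exponent_vectors 0 m = (if m = 0 then {\<lambda>_. 0} else {})"
  by (auto simp: exponent_vectors_def)

lemma complete_hom_of_nat:
  "complete_hom (int m) n x = (\<Sum>e\<in>exponent_vectors n m. \<Prod>i=1..n. x i ^ e i)"
  by (simp add: complete_hom_def exponent_vectors_def)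

lemma complete_hom_Suc:
  "complete_hom (int m) (Suc n) x = (\<Sum>j\<le>m. x (Suc n) ^ j * complete_hom (int (m - j)) n x)"
proof -
  have "(\<Sum>j\<le>m. x (Suc n) ^ j * complete_hom (int (m - j)) n x)
      = (\<Sum>(j, e)\<in>Sigma {..m} (\<lambda>j. exponent_vectors n (m - j)).
           x (Suc n) ^ j * (\<Prod>i=1..n. x i ^ e i))"
    unfolding complete_hom_of_nat
    by (simp add: sum_distrib_left sum.Sigma finite_exponent_vectors)
  also have "\<dots> = (\<Sum>e\<in>exponent_vectors (Suc n) m. \<Prod>i=1..Suc n. x i ^ e i)"
  proof (rule sum.reindex_bij_witness[where j = "\<lambda>(j, e). e(Suc n := j)"
                                       and i = "\<lambda>e. (e (Suc n), e(Suc n := 0))"])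
    fix b assume b: "b \<in> Sigma {..m} (\<lambda>j. exponent_vectors n (m - j))"
    then obtain j e where b_eq: "b = (j, e)" and j: "j \<le> m" and e: "e \<in> exponent_vectors n (m - j)"
      by blast
    have e_Suc: "e (Suc n) = 0" using e by (auto simp: exponent_vectors_def)
    have sum_upd: "(\<Sum>i=1..n. (e(Suc n := j)) i) = (\<Sum>i=1..n. e i)" by (rule sum.cong) auto
    have prod_upd: "(\<Prod>i=1..n. x i ^ (e(Suc n := j)) i) = (\<Prod>i=1..n. x i ^ e i)"
      by (rule prod.cong) auto
    show "(case b of (j, e) \<Rightarrow> e(Suc n := j)) \<in> exponent_vectors (Suc n) m"
      using j e sum_upd by (auto simp: b_eq exponent_vectors_def)
    show "(\<lambda>e. (e (Suc n), e(Suc n := 0))) (case b of (j, e) \<Rightarrow> e(Suc n := j)) = b"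
      using e_Suc by (auto simp: b_eq)
    show "(\<Prod>i=1..Suc n. x i ^ (case b of (j, e) \<Rightarrow> e(Suc n := j)) i) =
          (case b of (j, e) \<Rightarrow> x (Suc n) ^ j * (\<Prod>i=1..n. x i ^ e i))"
      using prod_upd by (simp add: b_eq mult.commute)
  next
    fix e assume e: "e \<in> exponent_vectors (Suc n) m"
    have "(\<Sum>i=1..n. (e(Suc n := 0)) i) = (\<Sum>i=1..n. e i)" by (rule sum.cong) auto
    then show "(e (Suc n), e(Suc n := 0)) \<in> Sigma {..m} (\<lambda>j. exponent_vectors n (m - j))"
      using e by (auto simp: exponent_vectors_def)
  qed auto
  finally show ?thesis by (simp add: complete_hom_of_nat)
qed

lemma fps_complete_hom:
  "Abs_fps (\<lambda>m. complete_hom (int m) n x) = (\<Prod>i=1..n. Abs_fps (\<lambda>j. x i ^ j))"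
proof (induction n)
  case 0
  show ?case by (rule fps_ext) (simp add: complete_hom_of_nat exponent_vectors_0)
next
  case (Suc n)
  have "(\<Prod>i=1..Suc n. Abs_fps (\<lambda>j. x i ^ j))
      = Abs_fps (\<lambda>j. x (Suc n) ^ j) * Abs_fps (\<lambda>m. complete_hom (int m) n x)"
    by (simp add: Suc.IH mult.commute)
  also have "\<dots> = Abs_fps (\<lambda>m. complete_hom (int m) (Suc n) x)"
    by (rule fps_ext) (simp add: fps_mult_nth atLeast0AtMost complete_hom_Suc)
  finally show ?case by simp
qed

lemma fps_geometric_mult:
  fixes a :: "'a::comm_ring_1"
  shows "Abs_fps (\<lambda>j. a ^ j) * (1 - fps_const a * fps_X) = 1"
proof (rule fps_ext)
  fix m
  have "Abs_fps (\<lambda>j. a ^ j) * (1 - fps_const a * fps_X)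
      = Abs_fps (\<lambda>j. a ^ j) - fps_const a * (fps_X * Abs_fps (\<lambda>j. a ^ j))"
    by (simp add: algebra_simps)
  then show "(Abs_fps (\<lambda>j. a ^ j) * (1 - fps_const a * fps_X)) $ m = (1 :: 'a fps) $ m"
    by (cases m) simp_all
qed

lemma fps_nth_below_if_mult_binomial_eq_1:
  fixes F :: "'a::comm_ring_1 fps"
  assumes "F * (1 - fps_const c * fps_X ^ n) = 1" and "m < n"
  shows "F $ m = (if m = 0 then 1 else 0)"
proof -
  have "F - fps_const c * (fps_X ^ n * F) = 1"
    using assms(1) by (simp add: algebra_simps)
  then have "(F - fps_const c * (fps_X ^ n * F)) $ m = (1 :: 'a fps) $ m" by simp
  then show ?thesis using assms(2) by (simp add: fps_X_power_mult_nth)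
qed

lemma reflect_poly_binomial:
  assumes "0 < n"
  shows "reflect_poly (monom 1 n - [:c:]) = 1 - monom (c :: 'a::comm_ring_1) n"
proof -
  have deg: "degree (monom 1 n - [:c:]) = n"
    using assms degree_add_eq_left[of "[:- c:]" "monom 1 n"]
    by (simp add: degree_monom_eq diff_conv_add_uminus)
  show ?thesis
  proof (rule poly_eqI)
    fix i
    show "coeff (reflect_poly (monom 1 n - [:c:])) i = coeff (1 - monom c n) i"
      unfolding coeff_reflect_poly deg using assms
      by (cases "i = 0"; cases "i = n"; cases "n < i")
        (auto simp: coeff_monom coeff_1 coeff_pCons split: nat.split)
  qed
qed

lemma fps_prod_roots_binomial:
  fixes x :: "nat \<Rightarrow> 'a::idom"
  assumes roots: "(\<Prod>i=1..n. [:- x i, 1:]) = monom 1 n - [:lam:]" and "0 < n"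
  shows "(\<Prod>i=1..n. 1 - fps_const (x i) * fps_X) = 1 - fps_const lam * fps_X ^ n"
proof -
  have reflect_linear: "reflect_poly [:- a, 1:] = [:1, - a:]" for a :: 'a
    by (rule poly_eqI) (auto simp: coeff_reflect_poly coeff_pCons split: nat.splits)
  have fps_linear: "fps_of_poly [:1, - a:] = 1 - fps_const a * fps_X" for a :: 'a
    by (rule fps_ext) (simp add: coeff_pCons fps_X_def split: nat.split)
  have "(\<Prod>i=1..n. [:1, - x i:]) = 1 - monom lam n"
    using arg_cong[OF roots, of reflect_poly] reflect_poly_binomial[OF \<open>0 < n\<close>]
    by (simp add: reflect_poly_prod reflect_linear)
  from arg_cong[OF this, of fps_of_poly] show ?thesis
    by (simp add: fps_of_poly_prod fps_linear fps_of_poly_diff fps_of_poly_monom)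
qed

text \<open>Generating functions: \<open>\<Sum>\<^sub>m S\<^sub>m t\<^sup>m = 1 / \<Prod>\<^sub>i (1 - \<alpha>\<^sub>i t) = 1 / (1 - \<lambda> t\<^sup>n)\<close>.\<close>
lemma complete_hom_roots_binomial:
  fixes x :: "nat \<Rightarrow> 'a::idom"
  assumes roots: "(\<Prod>i=1..n. [:- x i, 1:]) = monom 1 n - [:lam:]"
    and "0 < n" and "z < int n"
  shows "complete_hom z n x = (if z = 0 then 1 else 0)"
proof (cases "z < 0")
  case True
  then show ?thesis by (simp add: complete_hom_def)
next
  case False
  then obtain m where z: "z = int m" by (metis nonneg_int_cases not_less)
  have "Abs_fps (\<lambda>m. complete_hom (int m) n x) * (1 - fps_const lam * fps_X ^ n)
      = (\<Prod>i=1..n. Abs_fps (\<lambda>j. x i ^ j) * (1 - fps_const (x i) * fps_X))"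
    by (simp add: fps_complete_hom fps_prod_roots_binomial[OF roots \<open>0 < n\<close>, symmetric] prod.distrib)
  also have "\<dots> = 1" by (simp add: fps_geometric_mult)
  finally have "Abs_fps (\<lambda>m. complete_hom (int m) n x) $ m = (if m = 0 then 1 else 0)"
    using fps_nth_below_if_mult_binomial_eq_1 \<open>z < int n\<close> z by fastforce
  then show ?thesis by (simp add: z)
qed

lemma root_power_eq:
  fixes x :: "nat \<Rightarrow> 'a::idom"
  assumes roots: "(\<Prod>i=1..n. [:- x i, 1:]) = monom 1 n - [:lam:]" and "a \<in> {1..n}"
  shows "x a ^ n = lam"
proof -
  have "poly (\<Prod>i=1..n. [:- x i, 1:]) (x a) = 0"
    unfolding poly_prod using \<open>a \<in> {1..n}\<close> by (intro prod_zero) auto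
  then show ?thesis using roots by (simp add: poly_monom)
qed

lemma prod_roots_binomial:
  fixes x :: "nat \<Rightarrow> 'a::idom"
  assumes roots: "(\<Prod>i=1..n. [:- x i, 1:]) = monom 1 n - [:lam:]" and "0 < n"
  shows "(-1) ^ (n - 1) * (\<Prod>i=1..n. x i) = lam"
proof -
  have "(-1) ^ n * (\<Prod>i=1..n. x i) = (\<Prod>i=1..n. (-1) * x i)"
    by (subst prod.distrib) simp
  also have "\<dots> = (\<Prod>i=1..n. - x i)" by simp
  also have "\<dots> = - lam"
    using arg_cong[OF roots, of "\<lambda>p. poly p 0"] \<open>0 < n\<close> by (simp add: poly_prod poly_monom)
  finally show ?thesis using \<open>0 < n\<close> by (cases n) simp_all
qed

text \<open>Compare the coefficients of \<open>x\<^bsup>n-1-m\<^esup>\<close> in \<open>p' = n x\<^bsup>n-1\<^esup>\<close> and in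
  \<open>p' = \<Sum>\<^sub>a p / (x - \<alpha>\<^sub>a)\<close>, where \<open>p / (x - \<alpha>\<^sub>a) = \<Sum>\<^sub>i\<^sub><\<^sub>n \<alpha>\<^sub>a\<^bsup>n-1-i\<^esup> x\<^sup>i\<close>.\<close>
lemma power_sum_roots_binomial_below:
  fixes x :: "nat \<Rightarrow> 'a::idom"
  assumes roots: "(\<Prod>i=1..n. [:- x i, 1:]) = monom 1 n - [:lam:]" and "m < n"
  shows "(\<Sum>a=1..n. x a ^ m) = (if m = 0 then of_nat n else 0)"
proof -
  define R where "R a = (\<Sum>i<n. monom (x a ^ (n - Suc i)) i)" for a
  have cofactor: "(\<Prod>i\<in>{1..n} - {a}. [:- x i, 1:]) = R a" if a: "a \<in> {1..n}" for a
  proof -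
    have "[:- x a, 1:] * (\<Prod>i\<in>{1..n} - {a}. [:- x i, 1:]) = monom 1 n - [:lam:]"
      using roots a by (simp add: prod.remove)
    also have "\<dots> = [:0, 1:] ^ n - [:x a:] ^ n"
      using root_power_eq[OF roots a] by (simp add: monom_altdef poly_const_pow)
    also have "\<dots> = ([:0, 1:] - [:x a:]) * (\<Sum>i<n. [:x a:] ^ (n - Suc i) * [:0, 1:] ^ i)"
      by (rule power_diff_sumr2)
    also have "\<dots> = [:- x a, 1:] * R a"
      by (simp add: R_def monom_altdef poly_const_pow)
    finally show ?thesis by (subst (asm) mult_left_cancel) auto
  qed
  have "(\<Sum>a=1..n. R a) = (\<Sum>a=1..n. (\<Prod>i\<in>{1..n} - {a}. [:- x i, 1:]) * pderiv [:- x a, 1:])"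
  proof (rule sum.cong)
    fix a assume "a \<in> {1..n}"
    then show "R a = (\<Prod>i\<in>{1..n} - {a}. [:- x i, 1:]) * pderiv [:- x a, 1:]"
      unfolding cofactor[OF \<open>a \<in> {1..n}\<close>] by (simp add: pderiv_pCons)
  qed simp
  also have "\<dots> = pderiv (\<Prod>i=1..n. [:- x i, 1:])"
    by (simp only: pderiv_prod)
  also have "\<dots> = monom (of_nat n) (n - 1)"
    using roots by (simp add: pderiv_monom pderiv_diff)
  finally have pderiv_eq: "(\<Sum>a=1..n. R a) = monom (of_nat n) (n - 1)" .
  have "coeff (R a) (n - 1 - m) = x a ^ m" for a
    using \<open>m < n\<close> by (simp add: R_def coeff_sum coeff_monom Suc_diff_Suc)
  then have "(\<Sum>a=1..n. x a ^ m) = coeff (\<Sum>a=1..n. R a) (n - 1 - m)"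
    by (simp add: coeff_sum)
  also have "\<dots> = coeff (monom (of_nat n) (n - 1)) (n - 1 - m)"
    unfolding pderiv_eq ..
  finally show ?thesis using \<open>m < n\<close> by (auto simp: coeff_monom)
qed

lemma power_sum_roots_binomial:
  fixes x :: "nat \<Rightarrow> 'a::idom"
  assumes roots: "(\<Prod>i=1..n. [:- x i, 1:]) = monom 1 n - [:lam:]" and "m < 2 * n"
  shows "(\<Sum>a=1..n. x a ^ m) = (if m = 0 then of_nat n else if m = n then of_nat n * lam else 0)"
proof (cases "m < n")
  case True
  then show ?thesis using power_sum_roots_binomial_below[OF roots] by auto
next
  case False
  have "(\<Sum>a=1..n. x a ^ m) = (\<Sum>a=1..n. lam * x a ^ (m - n))"
  proof (rule sum.cong)
    fix a assume "a \<in> {1..n}"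
    then have "x a ^ m = x a ^ n * x a ^ (m - n)"
      using False by (simp flip: power_add)
    then show "x a ^ m = lam * x a ^ (m - n)"
      using root_power_eq[OF roots \<open>a \<in> {1..n}\<close>] by simp
  qed simp
  also have "\<dots> = lam * (\<Sum>a=1..n. x a ^ (m - n))" by (simp add: sum_distrib_left)
  also have "\<dots> = lam * (if m - n = 0 then of_nat n else 0)"
    using power_sum_roots_binomial_below[OF roots, of "m - n"] \<open>m < 2 * n\<close> False by simp
  finally show ?thesis using False by (auto simp: mult.commute)
qed

lemma poly_eq_sum_below_degree:
  fixes y :: "'a::comm_semiring_1"
  assumes "degree p < N"
  shows "poly p y = (\<Sum>i<N. coeff p i * y ^ i)"
  unfolding poly_altdef using assms
  by (intro sum.mono_neutral_left) (auto simp: coeff_eq_0)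

lemma sum_poly_roots_binomial:
  fixes x :: "nat \<Rightarrow> 'a::idom"
  assumes roots: "(\<Prod>i=1..n. [:- x i, 1:]) = monom 1 n - [:lam:]"
    and "0 < n" and "degree p < 2 * n"
  shows "(\<Sum>a=1..n. poly p (x a)) = of_nat n * (coeff p 0 + lam * coeff p n)"
proof -
  have "(\<Sum>a=1..n. poly p (x a)) = (\<Sum>a=1..n. \<Sum>i<2*n. coeff p i * x a ^ i)"
    using poly_eq_sum_below_degree[OF \<open>degree p < 2 * n\<close>] by simp
  also have "\<dots> = (\<Sum>i<2*n. coeff p i * (\<Sum>a=1..n. x a ^ i))"
    by (subst sum.swap) (simp add: sum_distrib_left)
  also have "\<dots> = (\<Sum>i<2*n. (if i = 0 then coeff p i * of_nat n else 0)
                          + (if i = n then coeff p i * (of_nat n * lam) else 0))"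
  proof (rule sum.cong)
    fix i assume "i \<in> {..<2*n}"
    then show "coeff p i * (\<Sum>a=1..n. x a ^ i)
             = (if i = 0 then coeff p i * of_nat n else 0)
               + (if i = n then coeff p i * (of_nat n * lam) else 0)"
      using power_sum_roots_binomial[OF roots, of i] \<open>0 < n\<close> by auto
  qed simp
  also have "\<dots> = of_nat n * (coeff p 0 + lam * coeff p n)"
    using \<open>0 < n\<close> by (simp add: sum.distrib algebra_simps)
  finally show ?thesis .
qed

lemma Omega_roots_binomial:
  fixes x :: "nat \<Rightarrow> 'a::idom"
  assumes roots: "(\<Prod>i=1..n. [:- x i, 1:]) = monom 1 n - [:lam:]"
    and "0 < n" and "l < n" and t: "t \<in> {r..l}"
  shows "Omega n l x eta (int l + 1 + int r - int t) = eta (l + r - t)"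
proof -
  have "Omega n l x eta (int l + 1 + int r - int t) = (\<Sum>s=0..l. if s = l + r - t then eta s else 0)"
    unfolding Omega_def
  proof (rule sum.cong)
    fix s assume "s \<in> {0..l}"
    then have "complete_hom (int s + 1 - (int l + 1 + int r - int t)) n x
             = (if s = l + r - t then 1 else 0)"
      using t \<open>l < n\<close> complete_hom_roots_binomial[OF roots \<open>0 < n\<close>] by auto
    then show "eta s * complete_hom (int s + 1 - (int l + 1 + int r - int t)) n x
             = (if s = l + r - t then eta s else 0)" by simp
  qed simp
  also have "\<dots> = eta (l + r - t)" using t by auto
  finally show ?thesis .
qed

lemma sum_Phi_roots_binomial:
  fixes x :: "nat \<Rightarrow> 'a::idom"
  assumes roots: "(\<Prod>i=1..n. [:- x i, 1:]) = monom 1 n - [:lam:]" and "0 < n" and "l < n"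
  shows "(\<Sum>t=r..l. eta t * ((-1) ^ (n - 1) * (\<Prod>i=1..n. x i) *
            Omega n l x eta (int l + 1 + int r - int t)))
       = lam * (\<Sum>t=r..l. eta t * eta (l + r - t))"
  unfolding prod_roots_binomial[OF roots \<open>0 < n\<close>] sum_distrib_left
  by (rule sum.cong) (simp_all add: Omega_roots_binomial[OF roots \<open>0 < n\<close> \<open>l < n\<close>])

text \<open>The translation \<open>x \<mapsto> x + 1\<close> permutes the ring, so adding \<open>1\<close> to every element
  leaves the total sum unchanged.\<close>
lemma of_nat_card_UNIV_eq_0: "of_nat (card (UNIV :: 'a::{finite,ring_1} set)) = (0::'a)"
proof -
  have "(\<Sum>x\<in>(UNIV::'a set). x + 1) = (\<Sum>x\<in>UNIV. x)"
    by (rule sum.reindex_bij_witness[where i = "\<lambda>x. x - 1" and j = "\<lambda>x. x + 1"]) simp_all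
  then show ?thesis by (simp add: sum.distrib)
qed

lemma of_nat_neq_0_if_dvd_card_minus_1:
  assumes "n dvd card (UNIV :: 'a::{finite,field} set) - 1"
  shows "of_nat n \<noteq> (0::'a)"
proof
  assume "of_nat n = (0::'a)"
  then have "of_nat (card (UNIV :: 'a set) - 1) = (0::'a)"
    using assms by (auto elim!: dvdE)
  moreover have "of_nat (card (UNIV :: 'a set) - 1) = (-1::'a)"
    using of_nat_card_UNIV_eq_0[where 'a='a] finite_UNIV_card_ge_0[where 'a='a]
    by (simp add: of_nat_diff)
  ultimately show False by simp
qed

lemma weighted_power_sums_zero_imp_zero:
  fixes b y :: "nat \<Rightarrow> 'a::idom"
  assumes "finite B" and "inj_on b B"
    and sums: "\<And>j. j < card B \<Longrightarrow> (\<Sum>i\<in>B. y i * b i ^ j) = 0"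
    and "i0 \<in> B"
  shows "y i0 = 0"
proof -
  define L where "L = (\<Prod>i\<in>B - {i0}. [:- b i, 1:])"
  have "degree L \<le> card (B - {i0})"
    unfolding L_def using degree_prod_sum_le[of "B - {i0}" "\<lambda>i. [:- b i, 1:]"] \<open>finite B\<close>
    by (simp add: o_def)
  also have "\<dots> < card B" using \<open>finite B\<close> \<open>i0 \<in> B\<close> by (rule card_Diff1_less)
  finally have "degree L < card B" .
  then have "(\<Sum>i\<in>B. y i * poly L (b i)) = (\<Sum>j<card B. coeff L j * (\<Sum>i\<in>B. y i * b i ^ j))"
    by (simp add: poly_eq_sum_below_degree sum_distrib_left sum_distrib_right algebra_simps
                  sum.swap[of _ B])
  also have "\<dots> = 0" using sums by simp
  finally have sum_L: "(\<Sum>i\<in>B. y i * poly L (b i)) = 0" .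
  have "poly L (b i) = 0" if "i \<in> B - {i0}" for i
    unfolding L_def poly_prod using that \<open>finite B\<close> by (intro prod_zero) auto
  then have "(\<Sum>i\<in>B. y i * poly L (b i)) = y i0 * poly L (b i0)"
    using \<open>finite B\<close> \<open>i0 \<in> B\<close> by (simp add: sum.remove)
  moreover have "poly L (b i0) \<noteq> 0"
    unfolding L_def poly_prod using \<open>finite B\<close> \<open>inj_on b B\<close> \<open>i0 \<in> B\<close>
    by (subst prod_zero_iff) (auto dest: inj_onD)
  ultimately show ?thesis using sum_L by simp
qed

lemma coeff_sum_monom_lessThan:
  "coeff (\<Sum>i<k. monom (c i) i) j = (if j < k then c j else (0::'a::comm_ring_1))"
  by (simp add: coeff_sum coeff_monom)

lemma degree_sum_monom_lessThan:
  fixes c :: "nat \<Rightarrow> 'a::comm_ring_1"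
  shows "degree (\<Sum>i<k. monom (c i) i) \<le> k - 1"
  by (rule degree_le) (auto simp: coeff_sum_monom_lessThan)

definition eta_poly :: "nat \<Rightarrow> (nat \<Rightarrow> 'a::comm_ring_1) \<Rightarrow> 'a poly" where
  "eta_poly l eta = (\<Sum>j=0..l. monom (eta j) j)"

lemma coeff_eta_poly: "coeff (eta_poly l eta) j = (if j \<le> l then eta j else 0)"
  by (simp add: eta_poly_def coeff_sum coeff_monom)

lemma degree_eta_poly: "degree (eta_poly l eta) \<le> l"
  by (rule degree_le) (simp add: coeff_eta_poly)

lemma coeff_eta_poly_square:
  assumes "r \<le> l"
  shows "coeff (eta_poly l eta * eta_poly l eta) (l + r) = (\<Sum>t=r..l. eta t * eta (l + r - t))"
proof -
  have "coeff (eta_poly l eta * eta_poly l eta) (l + r)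
      = (\<Sum>t\<le>l + r. coeff (eta_poly l eta) t * coeff (eta_poly l eta) (l + r - t))"
    by (rule coeff_mult)
  also have "\<dots> = (\<Sum>t=r..l. coeff (eta_poly l eta) t * coeff (eta_poly l eta) (l + r - t))"
    by (rule sum.mono_neutral_right) (auto simp: coeff_eta_poly)
  also have "\<dots> = (\<Sum>t=r..l. eta t * eta (l + r - t))"
    by (rule sum.cong) (auto simp: coeff_eta_poly)
  finally show ?thesis .
qed

definition tgrs_poly :: "nat \<Rightarrow> nat \<Rightarrow> (nat \<Rightarrow> 'a::comm_ring_1) \<Rightarrow> (nat \<Rightarrow> 'a) \<Rightarrow> 'a poly" where
  "tgrs_poly k l eta fc = (\<Sum>i<k. monom (fc i) i) + smult (fc 0) (monom 1 k * eta_poly l eta)"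

lemma tgrs_polys_eq_range: "tgrs_polys k l eta = range (tgrs_poly k l eta)"
proof -
  have "(\<Sum>j=0..l. monom (eta j) (k + j)) = monom 1 k * eta_poly l eta"
    by (simp add: eta_poly_def sum_distrib_left mult_monom)
  then show ?thesis by (auto simp: tgrs_polys_def tgrs_poly_def)
qed

lemma degree_monom_mult_eta_poly:
  fixes eta :: "nat \<Rightarrow> 'a::comm_ring_1"
  shows "degree (monom 1 k * eta_poly l eta) \<le> k + l"
  using degree_mult_le[of "monom 1 k" "eta_poly l eta"] degree_monom_le[of "1::'a" k]
    degree_eta_poly[of l eta]
  by linarith

lemma degree_tgrs_poly: "degree (tgrs_poly k l eta fc) \<le> k + l"
  unfolding tgrs_poly_def
  using degree_sum_monom_lessThan[of fc k] degree_monom_mult_eta_poly[of k l eta]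
  by (intro degree_add_le) (auto intro: order.trans[OF degree_smult_le])

lemma zero_mem_tgrs_polys: "0 \<in> tgrs_polys k l eta"
proof -
  have "tgrs_poly k l eta (\<lambda>_. 0) = 0" by (simp add: tgrs_poly_def)
  then show ?thesis unfolding tgrs_polys_eq_range by (metis rangeI)
qed

lemma monom_mem_tgrs_polys:
  assumes "0 < j" and "j < k"
  shows "monom 1 j \<in> tgrs_polys k l eta"
proof -
  have "tgrs_poly k l eta (\<lambda>i. if i = j then 1 else 0) = monom 1 j"
    using assms by (intro poly_eqI) (auto simp: tgrs_poly_def coeff_sum_monom_lessThan coeff_monom)
  then show ?thesis unfolding tgrs_polys_eq_range by (metis rangeI)
qed

lemma one_plus_mem_tgrs_polys:
  assumes "0 < k"
  shows "1 + monom 1 k * eta_poly l eta \<in> tgrs_polys k l eta"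
proof -
  have "(\<Sum>i<k. monom (if i = 0 then 1 else 0) i) = (1 :: 'a poly)"
    using assms by (intro poly_eqI) (auto simp: coeff_sum_monom_lessThan coeff_1)
  then have "tgrs_poly k l eta (\<lambda>i. if i = 0 then 1 else 0) = 1 + monom 1 k * eta_poly l eta"
    by (simp add: tgrs_poly_def)
  then show ?thesis unfolding tgrs_polys_eq_range by (metis rangeI)
qed

text \<open>Against \<open>g = x\<^sup>j\<close> the unweighted sum vanishes, since \<open>x\<^sup>j f\<close> has no terms in degree \<open>0\<close>
  or \<open>n\<close>; what is left is a Vandermonde system in the \<open>(w\<^sub>i - 1) f(\<alpha>\<^sub>i) \<alpha>\<^sub>i\<close>, \<open>i \<in> B\<close>.\<close>
lemma poly_roots_eq_0_if_weight_neq_1: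
  fixes alpha w :: "nat \<Rightarrow> 'a::idom"
  assumes roots: "(\<Prod>i=1..n. [:- alpha i, 1:]) = monom 1 n - [:lam:]"
    and "lam \<noteq> 0" and "inj_on alpha {1..n}"
    and B: "B \<subseteq> {1..n}" and w_1: "\<And>i. i \<in> {1..n} - B \<Longrightarrow> w i = 1"
    and deg: "degree f + card B < n"
    and orth: "\<And>j. 0 < j \<Longrightarrow> j \<le> card B \<Longrightarrow> (\<Sum>i=1..n. w i * poly f (alpha i) * alpha i ^ j) = 0"
    and "i0 \<in> B" and "w i0 \<noteq> 1"
  shows "poly f (alpha i0) = 0"
proof -
  have "0 < n" using B \<open>i0 \<in> B\<close> by auto
  have finite_B: "finite B" using B finite_subset by blast
  have unweighted: "(\<Sum>i=1..n. poly f (alpha i) * alpha i ^ j) = 0" if "0 < j" "j \<le> card B" for j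
  proof -
    have "degree (monom 1 j * f) < 2 * n"
      using degree_mult_le[of "monom 1 j" f] degree_monom_le[of "1::'a" j] deg that by linarith
    then have "(\<Sum>i=1..n. poly (monom 1 j * f) (alpha i))
             = of_nat n * (coeff (monom 1 j * f) 0 + lam * coeff (monom 1 j * f) n)"
      by (rule sum_poly_roots_binomial[OF roots \<open>0 < n\<close>])
    also have "\<dots> = 0"
      using that deg by (simp add: coeff_monom_mult coeff_eq_0)
    finally show ?thesis by (simp add: poly_monom mult.commute)
  qed
  have vandermonde_system:
    "(\<Sum>i\<in>B. (w i - 1) * poly f (alpha i) * alpha i * alpha i ^ j) = 0" if "j < card B" for j
  proof -
    have "(\<Sum>i\<in>B. (w i - 1) * poly f (alpha i) * alpha i ^ Suc j)
        = (\<Sum>i=1..n. (w i - 1) * poly f (alpha i) * alpha i ^ Suc j)"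
      using B w_1 by (intro sum.mono_neutral_left) auto
    also have "\<dots> = (\<Sum>i=1..n. w i * poly f (alpha i) * alpha i ^ Suc j)
                   - (\<Sum>i=1..n. poly f (alpha i) * alpha i ^ Suc j)"
      by (simp add: algebra_simps sum_subtractf)
    also have "\<dots> = 0"
      using orth[OF zero_less_Suc] unweighted[OF zero_less_Suc] that by simp
    finally show ?thesis by (simp add: mult.assoc)
  qed
  have "(w i0 - 1) * poly f (alpha i0) * alpha i0 = 0"
    using weighted_power_sums_zero_imp_zero[OF finite_B inj_on_subset[OF \<open>inj_on alpha {1..n}\<close> B],
        where y = "\<lambda>i. (w i - 1) * poly f (alpha i) * alpha i"]
      vandermonde_system \<open>i0 \<in> B\<close> by blast
  moreover have "alpha i0 \<noteq> 0"
    using root_power_eq[OF roots] B \<open>i0 \<in> B\<close> \<open>lam \<noteq> 0\<close> \<open>0 < n\<close> by (metis subsetD zero_power)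
  ultimately show ?thesis using \<open>w i0 \<noteq> 1\<close> by simp
qed

text \<open>Against \<open>g = 1 + x\<^sup>k \<eta>(x)\<close>, the degree-\<open>0\<close> and degree-\<open>n\<close> coefficients of \<open>f g\<close>
  are \<open>f\<^sub>0\<close> and \<open>f\<^sub>0 \<Sum>\<^sub>t \<eta>\<^sub>t \<eta>\<^bsub>l+r-t\<^esub>\<close>.\<close>
lemma tgrs_poly_coeff_0_eq_0:
  fixes alpha :: "nat \<Rightarrow> 'a::idom"
  assumes roots: "(\<Prod>i=1..n. [:- alpha i, 1:]) = monom 1 n - [:lam:]"
    and "of_nat n \<noteq> (0::'a)" and n_eq: "n = 2 * k + l + r" and "0 < k" and "r \<le> l"
    and orth: "(\<Sum>i=1..n. poly (tgrs_poly k l eta fc * (1 + monom 1 k * eta_poly l eta)) (alpha i)) = 0"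
    and cond: "1 + lam * (\<Sum>t=r..l. eta t * eta (l + r - t)) \<noteq> 0"
  shows "fc 0 = 0"
proof -
  define H where "H = (\<Sum>i<k. monom (fc i) i)"
  define E where "E = monom 1 k * eta_poly l eta"
  define S where "S = (\<Sum>t=r..l. eta t * eta (l + r - t))"
  have deg_H: "degree H \<le> k - 1" unfolding H_def by (rule degree_sum_monom_lessThan)
  have deg_E: "degree E \<le> k + l" unfolding E_def by (rule degree_monom_mult_eta_poly)
  have fg: "tgrs_poly k l eta fc * (1 + E) = H + H * E + smult (fc 0) E + smult (fc 0) (E * E)"
    by (simp add: tgrs_poly_def H_def E_def algebra_simps smult_add_right)
  have "coeff (E * E) n = S"
  proof -
    have "E * E = monom 1 (2 * k) * (eta_poly l eta * eta_poly l eta)"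
      by (simp add: E_def mult_monom algebra_simps flip: mult_2)
    then show ?thesis
      using coeff_eta_poly_square[OF \<open>r \<le> l\<close>] by (simp add: n_eq coeff_monom_mult S_def)
  qed
  moreover have "coeff H n = 0" "coeff (H * E) n = 0" "coeff E n = 0"
    using deg_H deg_E degree_mult_le[of H E] n_eq \<open>0 < k\<close> by (auto intro!: coeff_eq_0)
  ultimately have coeff_n: "coeff (tgrs_poly k l eta fc * (1 + E)) n = fc 0 * S"
    unfolding fg by simp
  have coeff_0: "coeff (tgrs_poly k l eta fc * (1 + E)) 0 = fc 0"
    unfolding fg using \<open>0 < k\<close>
    by (simp add: H_def E_def coeff_sum_monom_lessThan coeff_monom_mult coeff_mult_0)
  have "degree (1 + E) \<le> k + l"
    using deg_E by (intro degree_add_le) auto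
  then have "degree (tgrs_poly k l eta fc * (1 + E)) < 2 * n"
    using degree_mult_le[of "tgrs_poly k l eta fc" "1 + E"] degree_tgrs_poly[of k l eta fc]
      n_eq \<open>0 < k\<close> by linarith
  moreover have "0 < n" using n_eq \<open>0 < k\<close> by simp
  ultimately have "(\<Sum>i=1..n. poly (tgrs_poly k l eta fc * (1 + E)) (alpha i))
      = of_nat n * (coeff (tgrs_poly k l eta fc * (1 + E)) 0
                    + lam * coeff (tgrs_poly k l eta fc * (1 + E)) n)"
    by (intro sum_poly_roots_binomial[OF roots])
  also have "\<dots> = of_nat n * (fc 0 * (1 + lam * S))"
    unfolding coeff_0 coeff_n by (simp add: algebra_simps)
  finally have "of_nat n * (fc 0 * (1 + lam * S)) = 0" using orth by (simp only: E_def)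
  then show ?thesis using \<open>of_nat n \<noteq> 0\<close> cond by (simp add: S_def)
qed

lemma tgrs_poly_eq_0_if_orthogonal:
  fixes alpha w :: "nat \<Rightarrow> 'a::idom"
  assumes roots: "(\<Prod>i=1..n. [:- alpha i, 1:]) = monom 1 n - [:lam:]"
    and "of_nat n \<noteq> (0::'a)" and "lam \<noteq> 0" and "inj_on alpha {1..n}"
    and n_eq: "n = 2 * k + l + r" and "0 < k" and "r \<le> l"
    and w_1: "\<forall>i\<in>{1..n-k+1}. w i = 1" and w_neq_1: "\<forall>i\<in>{n-k+2..n}. w i \<noteq> 1"
    and cond: "1 + lam * (\<Sum>t=r..l. eta t * eta (l + r - t)) \<noteq> 0"
    and f: "f \<in> tgrs_polys k l eta"
    and orth: "\<forall>g\<in>tgrs_polys k l eta. (\<Sum>i=1..n. w i * poly f (alpha i) * poly g (alpha i)) = 0"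
  shows "f = 0"
proof -
  obtain fc where f_eq: "f = tgrs_poly k l eta fc"
    using f by (auto simp: tgrs_polys_eq_range)
  define B where "B = {n-k+2..n}"
  have B_sub: "B \<subseteq> {1..n}" and card_B: "card B = k - 1"
    using n_eq \<open>0 < k\<close> by (auto simp: B_def)
  have vanish: "poly f (alpha i) = 0" if "i \<in> B" for i
  proof (rule poly_roots_eq_0_if_weight_neq_1[OF roots \<open>lam \<noteq> 0\<close> \<open>inj_on alpha {1..n}\<close> B_sub])
    show "w i = 1" if "i \<in> {1..n} - B" for i
      using that w_1 by (auto simp: B_def)
    show "degree f + card B < n"
      unfolding f_eq using degree_tgrs_poly[of k l eta fc] card_B n_eq \<open>0 < k\<close> by linarith
    show "(\<Sum>i=1..n. w i * poly f (alpha i) * alpha i ^ j) = 0" if "0 < j" "j \<le> card B" for j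
    proof -
      have "monom 1 j \<in> tgrs_polys k l eta"
        using that card_B by (intro monom_mem_tgrs_polys) auto
      from bspec[OF orth this] show ?thesis by (simp add: poly_monom)
    qed
    show "i \<in> B" "w i \<noteq> 1" using \<open>i \<in> B\<close> w_neq_1 by (auto simp: B_def)
  qed
  have "(\<Sum>i=1..n. poly (f * g) (alpha i)) = 0" if "g \<in> tgrs_polys k l eta" for g
  proof -
    have "(\<Sum>i=1..n. poly (f * g) (alpha i)) = (\<Sum>i=1..n. w i * poly f (alpha i) * poly g (alpha i))"
      using w_1 vanish by (intro sum.cong) (auto simp: B_def)
    then show ?thesis using orth that by simp
  qed
  then have "fc 0 = 0"
    using tgrs_poly_coeff_0_eq_0[OF roots \<open>of_nat n \<noteq> 0\<close> n_eq \<open>0 < k\<close> \<open>r \<le> l\<close> _ cond]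
      one_plus_mem_tgrs_polys[OF \<open>0 < k\<close>] f_eq by blast
  then have f_low: "f = (\<Sum>i<k. monom (fc i) i)"
    by (simp add: f_eq tgrs_poly_def)
  show "f = 0"
  proof (rule poly_eqI_degree)
    have "0 \<notin> alpha ` B"
      using root_power_eq[OF roots] B_sub \<open>lam \<noteq> 0\<close> n_eq \<open>0 < k\<close> by (force simp: zero_power)
    then show "card (insert 0 (alpha ` B)) > degree f"
      using card_image[OF inj_on_subset[OF \<open>inj_on alpha {1..n}\<close> B_sub]] card_B \<open>0 < k\<close>
        degree_sum_monom_lessThan[of fc k] by (simp add: f_low B_def)
    show "poly f x = poly 0 x" if "x \<in> insert 0 (alpha ` B)" for x
      using that vanish \<open>fc 0 = 0\<close> \<open>0 < k\<close>
      by (auto simp: f_low poly_0_coeff_0 coeff_sum_monom_lessThan)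
  qed (simp add: card_gt_0_iff B_def)
qed

lemma tgrs_code_inter_dual_eq_zero:
  assumes "\<And>f. f \<in> tgrs_polys k l eta \<Longrightarrow>
      \<forall>g\<in>tgrs_polys k l eta. (\<Sum>i=1..n. v i ^ 2 * poly f (alpha i) * poly g (alpha i)) = 0 \<Longrightarrow> f = 0"
  shows "tgrs_code n k l eta alpha v \<inter> dual_code n (tgrs_code n k l eta alpha v) = {\<lambda>i. 0}"
proof
  show "{\<lambda>i. 0} \<subseteq> tgrs_code n k l eta alpha v \<inter> dual_code n (tgrs_code n k l eta alpha v)"
    using zero_mem_tgrs_polys[of k l eta] by (force simp: tgrs_code_def dual_code_def)
  show "tgrs_code n k l eta alpha v \<inter> dual_code n (tgrs_code n k l eta alpha v) \<subseteq> {\<lambda>i. 0}"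
  proof
    fix c assume c: "c \<in> tgrs_code n k l eta alpha v \<inter> dual_code n (tgrs_code n k l eta alpha v)"
    then obtain f where f: "f \<in> tgrs_polys k l eta"
      and c_eq: "c = (\<lambda>i. if i \<in> {1..n} then v i * poly f (alpha i) else 0)"
      by (auto simp: tgrs_code_def)
    have "(\<Sum>i=1..n. v i ^ 2 * poly f (alpha i) * poly g (alpha i)) = 0"
      if g: "g \<in> tgrs_polys k l eta" for g
    proof -
      have "(\<lambda>i. if i \<in> {1..n} then v i * poly g (alpha i) else 0) \<in> tgrs_code n k l eta alpha v"
        using g by (auto simp: tgrs_code_def)
      then have "(\<Sum>i=1..n. (if i \<in> {1..n} then v i * poly g (alpha i) else 0) * c i) = 0"
        using c by (auto simp: dual_code_def)
      then show ?thesis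
        by (simp add: c_eq power2_eq_square algebra_simps)
    qed
    then have "f = 0" using assms f by blast
    then show "c \<in> {\<lambda>i. 0}" by (auto simp: c_eq)
  qed
qed

theorem theorem4p4:
  fixes n k l r :: nat
    and lam :: "'a::{finite,field}"
    and alpha eta v :: "nat \<Rightarrow> 'a"
  assumes q_odd: "odd (card (UNIV :: 'a set))"
    and n_pos: "0 < n"
    and n_dvd: "n dvd (card (UNIV :: 'a set) - 1)"
    and lam_nz: "lam \<noteq> 0"
    and lam_ord: "lam ^ ((card (UNIV :: 'a set) - 1) div n) = 1"
    and alpha_dist: "inj_on alpha {1..n}"
    and alpha_roots: "(\<Prod>i=1..n. [:- alpha i, 1:]) = monom 1 n - [:lam:]"
    and eta_nz: "\<exists>t\<le>l. eta t \<noteq> 0"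
    and r_le: "r \<le> l"
    and k_def: "int n - int l - int r = 2 * int k"
    and k_ge: "2 \<le> k"
    and v_pm: "\<forall>i\<in>{1..n-k+1}. v i = 1 \<or> v i = -1"
    and v_other: "\<forall>i\<in>{n-k+2..n}. v i \<notin> {-1, 0, 1}"
    and cond: "1 + (\<Sum>t=r..l. eta t *
                 ((-1) ^ (n - 1) * (\<Prod>i=1..n. alpha i) *
                  Omega n l alpha eta (int l + 1 + int r - int t))) \<noteq> 0"
  shows "tgrs_code n k l eta alpha v \<inter> dual_code n (tgrs_code n k l eta alpha v) = {\<lambda>i. 0}"
proof (rule tgrs_code_inter_dual_eq_zero)
  fix f assume f: "f \<in> tgrs_polys k l eta"
    and orth: "\<forall>g\<in>tgrs_polys k l eta. (\<Sum>i=1..n. v i ^ 2 * poly f (alpha i) * poly g (alpha i)) = 0"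
  have n_eq: "n = 2 * k + l + r"
    using k_def by linarith
  have "1 + lam * (\<Sum>t=r..l. eta t * eta (l + r - t)) \<noteq> 0"
    using cond sum_Phi_roots_binomial[OF alpha_roots n_pos, where l = l and r = r and eta = eta]
      n_eq k_ge by simp
  from tgrs_poly_eq_0_if_orthogonal[OF alpha_roots of_nat_neq_0_if_dvd_card_minus_1[OF n_dvd]
      lam_nz alpha_dist n_eq _ r_le _ _ this f orth]
  show "f = 0" using k_ge v_pm v_other by (auto simp: power2_eq_1_iff)
qed

end
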